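(* There exists a finite constant $C=C(d)$ such that for any integer $\ell\ge2$ there exists a flow $\psi^\ell$ connecting $p_\ell$ to $p_{\ell-1}$, with support contained in $\Lambda_\ell$, such that $|\psi^\ell(x;b)|\le C\ell^{-d}$ for every $x\in\Lambda_\ell$ and every $b\in\mathcal B$.
   Context: $\mathcal B=\{e_1,\dots,e_d\}$ is the canonical basis of $\mathbb Z^d$; $\Lambda_\ell=\{0,1,\dots,\ell-1\}^d\subseteq\mathbb Z^d$; $p_\ell$ is the uniform probability measure on $\Lambda_\ell$. A flow is a function $\phi:\mathbb Z^d\times\mathcal B\to\mathbb R$; its support is contained in $\Lambda$ if $\phi(x;b)\ne0$ implies $\{x,x+b\}\subseteq\Lambda$. A flow $\phi$ connects $p$ to $q$ if $p(z)-q(z)=\sum_{b\in\mathcal B}(\phi(z;b)-\phi(z-b;b))$ for all $z\in\mathbb Z^d$. *)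

theory Defs
  imports "HOL-Analysis.Analysis"
begin

text \<open>Points of Z^d are int vectors indexed by a finite type 'd with CARD('d) = d.
  The canonical basis vector e_i is axis i 1; a flow is a function of a point and a basis index.\<close>

definition unit_vec :: "'d::finite \<Rightarrow> int ^ 'd" where
  "unit_vec i = axis i 1"

definition box :: "int \<Rightarrow> (int ^ 'd::finite) set" where
  "box l = {x. \<forall>i. 0 \<le> x $ i \<and> x $ i < l}"

definition unif :: "int \<Rightarrow> int ^ 'd::finite \<Rightarrow> real" where
  "unif l z = (if z \<in> box l then 1 / real (card (box l :: (int ^ 'd) set)) else 0)"

definition flow_support_in :: "(int ^ 'd::finite \<Rightarrow> 'd \<Rightarrow> real) \<Rightarrow> (int ^ 'd) set \<Rightarrow> bool" where
  "flow_support_in \<phi> L \<longleftrightarrow> (\<forall>x b. \<phi> x b \<noteq> 0 \<longrightarrow> x \<in> L \<and> x + unit_vec b \<in> L)"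

definition flow_connects :: "(int ^ 'd::finite \<Rightarrow> 'd \<Rightarrow> real) \<Rightarrow> (int ^ 'd \<Rightarrow> real) \<Rightarrow> (int ^ 'd \<Rightarrow> real) \<Rightarrow> bool" where
  "flow_connects \<phi> p q \<longleftrightarrow>
     (\<forall>z. p z - q z = (\<Sum>b\<in>UNIV. \<phi> z b - \<phi> (z - unit_vec b) b))"

end

theory Submission
  imports Defs
begin

text \<open>In one dimension, the cumulative sum of \<open>p\<^sub>\<ell> - p\<^sub>\<ell>\<^sub>-\<^sub>1\<close> is a flow between them of size
  at most \<open>1/\<ell>\<close>. Both \<open>p\<^sub>\<ell>\<close> and \<open>p\<^sub>\<ell>\<^sub>-\<^sub>1\<close> are product measures, and after ordering the coordinates
  the difference \<open>\<Prod>u - \<Prod>v\<close> of two products telescopes into \<open>d\<close> terms, the \<open>b\<close>-th being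
  \<open>u - v\<close> in coordinate \<open>b\<close>, \<open>v\<close> in the earlier and \<open>u\<close> in the later coordinates. Replacing
  \<open>u - v\<close> by the one-dimensional flow gives a flow in direction \<open>b\<close> which is a product of \<open>d\<close>
  factors of size \<open>O(1/\<ell>)\<close>.\<close>

lemma prod_diff_telescope:
  fixes a b :: "'a \<Rightarrow> 'c::comm_ring_1" and \<rho> :: "'a \<Rightarrow> 'b::linorder"
  assumes "finite S" and "inj_on \<rho> S"
  shows "prod a S - prod b S =
    (\<Sum>k\<in>S. \<Prod>i\<in>S. if i = k then a i - b i else if \<rho> i < \<rho> k then b i else a i)"
  using assms
proof (induction S rule: finite_ranking_induct[where f = \<rho>])
  case empty
  then show ?case by simp
next
  case (insert x S)
  show ?case
  proof (cases "x \<in> S")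
    case True
    then show ?thesis using insert by (simp add: insert_absorb)
  next
    case x_new: False
    have below: "\<rho> i < \<rho> x" if "i \<in> S" for i
      using insert.hyps(2)[OF that] insert.prems x_new that
      by (metis inj_on_contraD insertCI order_le_imp_less_or_eq)
    have "(\<Prod>i\<in>insert x S. if i = k then a i - b i else if \<rho> i < \<rho> k then b i else a i)
        = a x * (\<Prod>i\<in>S. if i = k then a i - b i else if \<rho> i < \<rho> k then b i else a i)"
      if "k \<in> S" for k
    proof -
      have "x \<noteq> k" "\<not> \<rho> x < \<rho> k" using that x_new below[OF that] by auto
      then show ?thesis using x_new insert.hyps(1) by simp
    qed
    moreover have "(\<Prod>i\<in>insert x S. if i = x then a i - b i else if \<rho> i < \<rho> x then b i else a i)
        = (a x - b x) * prod b S"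
    proof -
      have "(\<Prod>i\<in>S. if i = x then a i - b i else if \<rho> i < \<rho> x then b i else a i) = prod b S"
        using x_new below by (intro prod.cong) auto
      then show ?thesis using x_new insert.hyps(1) by simp
    qed
    moreover have "prod a S - prod b S =
        (\<Sum>k\<in>S. \<Prod>i\<in>S. if i = k then a i - b i else if \<rho> i < \<rho> k then b i else a i)"
      using insert by (meson inj_on_subset subset_insertI)
    ultimately show ?thesis
      using x_new insert.hyps(1) by (simp add: sum_distrib_left algebra_simps)
  qed
qed

definition unif_1d :: "int \<Rightarrow> int \<Rightarrow> real" where
  "unif_1d l t = (if 0 \<le> t \<and> t < l then 1 / of_int l else 0)"

text \<open>The partial sums of \<open>unif_1d l - unif_1d (l - 1)\<close>: up to \<open>t \<in> {0..l-2}\<close> the sum is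
  \<open>(t + 1) (1/l - 1/(l - 1))\<close>, and from \<open>l - 1\<close> on it vanishes since both densities have mass 1.\<close>
definition flow_1d :: "int \<Rightarrow> int \<Rightarrow> real" where
  "flow_1d l t = (if 0 \<le> t \<and> t \<le> l - 2 then - of_int (t + 1) / (of_int l * of_int (l - 1)) else 0)"

lemma flow_1d_diff:
  assumes "l \<ge> 2"
  shows "flow_1d l t - flow_1d l (t - 1) = unif_1d l t - unif_1d (l - 1) t"
proof -
  define D :: real where "D = of_int l * of_int (l - 1)"
  have "D \<noteq> 0" using assms by (simp add: D_def)
  have step: "1 / of_int l - 1 / of_int (l - 1) = - 1 / D"
    using assms by (simp add: D_def field_simps)
  consider "t < 0" | "t = 0" | "1 \<le> t \<and> t \<le> l - 2" | "t = l - 1" | "t \<ge> l"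
    by linarith
  then show ?thesis
  proof cases
    case 3
    then have "flow_1d l t - flow_1d l (t - 1) = (- of_int (t + 1) - - of_int t) / D"
      by (simp add: flow_1d_def D_def diff_divide_distrib)
    then show ?thesis using 3 step by (simp add: unif_1d_def)
  next
    case 4
    then show ?thesis using assms by (simp add: flow_1d_def unif_1d_def field_simps)
  qed (use assms step in \<open>auto simp: flow_1d_def unif_1d_def D_def\<close>)
qed

lemma abs_unif_1d_le:
  assumes "l \<ge> 0"
  shows "\<bar>unif_1d l t\<bar> \<le> 1 / of_int l"
  using assms by (simp add: unif_1d_def)

lemma abs_flow_1d_le:
  assumes "l \<ge> 2"
  shows "\<bar>flow_1d l t\<bar> \<le> 1 / of_int l"
proof (cases "0 \<le> t \<and> t \<le> l - 2")
  case True
  have "of_int (t + 1) / (of_int l * of_int (l - 1)) \<le> (of_int (l - 1) :: real) / (of_int l * of_int (l - 1))"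
    using True assms by (intro divide_right_mono) auto
  also have "\<dots> = 1 / of_int l" using assms by simp
  finally show ?thesis using True by (simp add: flow_1d_def add.commute)
next
  case False
  then show ?thesis using assms by (auto simp: flow_1d_def)
qed

lemma card_box:
  assumes "l \<ge> 0"
  shows "card (box l :: (int ^ 'd::finite) set) = nat l ^ CARD('d)"
proof -
  have "box l = vec_lambda ` (PiE UNIV (\<lambda>_. {0..<l}) :: ('d \<Rightarrow> int) set)"
  proof (intro set_eqI iffI)
    fix x :: "int ^ 'd"
    assume "x \<in> box l"
    then have "vec_nth x \<in> PiE UNIV (\<lambda>_. {0..<l})" by (auto simp: box_def)
    then show "x \<in> vec_lambda ` PiE UNIV (\<lambda>_. {0..<l})" by (metis image_eqI vec_nth_inverse)
  qed (auto simp: box_def)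
  moreover have "inj (vec_lambda :: ('d \<Rightarrow> int) \<Rightarrow> int ^ 'd)"
    by (simp add: inj_def)
  ultimately show ?thesis
    using assms by (simp add: card_image inj_on_subset card_PiE)
qed

lemma unif_eq_prod_unif_1d: "unif l = (\<lambda>z :: int ^ 'd::finite. \<Prod>i\<in>UNIV. unif_1d l (z $ i))"
proof (rule ext)
  fix z :: "int ^ 'd"
  show "unif l z = (\<Prod>i\<in>UNIV. unif_1d l (z $ i))"
  proof (cases "z \<in> box l")
    case True
    then have "l > 0" by (auto simp: box_def intro: le_less_trans)
    have "(\<Prod>i\<in>UNIV. unif_1d l (z $ i)) = (\<Prod>i\<in>(UNIV::'d set). 1 / of_int l)"
      using True by (intro prod.cong) (auto simp: unif_1d_def box_def)
    then show ?thesis using True \<open>l > 0\<close>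
      by (simp add: unif_def card_box power_one_over)
  next
    case False
    then obtain i where "\<not> (0 \<le> z $ i \<and> z $ i < l)" by (auto simp: box_def)
    then have "unif_1d l (z $ i) = 0" by (simp add: unif_1d_def)
    then show ?thesis using False by (auto simp: unif_def prod_zero_iff)
  qed
qed

definition product_flow ::
    "('d::finite \<Rightarrow> 'r::linorder) \<Rightarrow> (int \<Rightarrow> real) \<Rightarrow> (int \<Rightarrow> real) \<Rightarrow> (int \<Rightarrow> real)
      \<Rightarrow> int ^ 'd \<Rightarrow> 'd \<Rightarrow> real" where
  "product_flow \<rho> u v \<phi> x b =
     (\<Prod>i\<in>UNIV. (if i = b then \<phi> else if \<rho> i < \<rho> b then v else u) (x $ i))"

lemma product_flow_diff:
  fixes z :: "int ^ 'd::finite"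
  shows "product_flow \<rho> u v \<phi> z b - product_flow \<rho> u v \<phi> (z - unit_vec b) b =
     (\<Prod>i\<in>UNIV. (if i = b then (\<lambda>t. \<phi> t - \<phi> (t - 1)) else if \<rho> i < \<rho> b then v else u) (z $ i))"
proof -
  define rest where "rest y = (\<Prod>i\<in>UNIV - {b}. (if \<rho> i < \<rho> b then v else u) (y $ i))"
    for y :: "int ^ 'd"
  have split: "(\<Prod>i\<in>UNIV. (if i = b then f else if \<rho> i < \<rho> b then v else u) (y $ i))
      = f (y $ b) * rest y" for f and y :: "int ^ 'd"
  proof -
    have "(\<Prod>i\<in>UNIV - {b}. (if i = b then f else if \<rho> i < \<rho> b then v else u) (y $ i)) = rest y"
      unfolding rest_def by (intro prod.cong) auto
    then show ?thesis by (subst prod.remove[of UNIV b]) auto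
  qed
  have "rest (z - unit_vec b) = rest z"
    unfolding rest_def by (intro prod.cong) (auto simp: unit_vec_def axis_def)
  then show ?thesis
    unfolding product_flow_def split by (simp add: unit_vec_def algebra_simps)
qed

lemma flow_connects_product_flow:
  fixes \<rho> :: "'d::finite \<Rightarrow> 'r::linorder"
  assumes "inj \<rho>" and "\<And>t. \<phi> t - \<phi> (t - 1) = u t - v t"
  shows "flow_connects (product_flow \<rho> u v \<phi>) (\<lambda>z. \<Prod>i\<in>UNIV. u (z $ i)) (\<lambda>z. \<Prod>i\<in>UNIV. v (z $ i))"
  unfolding flow_connects_def
proof
  fix z :: "int ^ 'd"
  have "(\<Sum>b\<in>UNIV. product_flow \<rho> u v \<phi> z b - product_flow \<rho> u v \<phi> (z - unit_vec b) b)
      = (\<Sum>b\<in>UNIV. \<Prod>i\<in>UNIV. if i = b then u (z $ i) - v (z $ i)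
                          else if \<rho> i < \<rho> b then v (z $ i) else u (z $ i))"
    unfolding product_flow_diff assms(2) by (intro sum.cong prod.cong) auto
  also have "\<dots> = (\<Prod>i\<in>UNIV. u (z $ i)) - (\<Prod>i\<in>UNIV. v (z $ i))"
    using assms(1) by (rule prod_diff_telescope[symmetric, OF finite])
  finally show "(\<Prod>i\<in>UNIV. u (z $ i)) - (\<Prod>i\<in>UNIV. v (z $ i)) =
      (\<Sum>b\<in>UNIV. product_flow \<rho> u v \<phi> z b - product_flow \<rho> u v \<phi> (z - unit_vec b) b)"
    by simp
qed

lemma flow_support_in_product_flow:
  fixes \<rho> :: "'d::finite \<Rightarrow> 'r::linorder"
  assumes "\<And>t. \<phi> t \<noteq> 0 \<Longrightarrow> 0 \<le> t \<and> t + 1 < l"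
    and "\<And>t. u t \<noteq> 0 \<Longrightarrow> 0 \<le> t \<and> t < l"
    and "\<And>t. v t \<noteq> 0 \<Longrightarrow> 0 \<le> t \<and> t < l"
  shows "flow_support_in (product_flow \<rho> u v \<phi>) (box l)"
  unfolding flow_support_in_def
proof (intro allI impI)
  fix x :: "int ^ 'd" and b :: 'd
  assume "product_flow \<rho> u v \<phi> x b \<noteq> 0"
  then have factor: "(if i = b then \<phi> else if \<rho> i < \<rho> b then v else u) (x $ i) \<noteq> 0" for i
    by (auto simp: product_flow_def)
  have coord: "0 \<le> x $ i \<and> x $ i < l" and last: "x $ b + 1 < l" for i
    using assms factor[of i] factor[of b] by (fastforce split: if_splits)+
  show "x \<in> box l \<and> x + unit_vec b \<in> box l"
    using coord last by (auto simp: box_def unit_vec_def axis_def)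
qed

lemma abs_product_flow_le:
  fixes x :: "int ^ 'd::finite"
  assumes "\<And>t. \<bar>\<phi> t\<bar> \<le> c" and "\<And>t. \<bar>u t\<bar> \<le> c" and "\<And>t. \<bar>v t\<bar> \<le> c"
  shows "\<bar>product_flow \<rho> u v \<phi> x b\<bar> \<le> c ^ CARD('d)"
proof -
  have "\<bar>product_flow \<rho> u v \<phi> x b\<bar>
      = (\<Prod>i\<in>UNIV. \<bar>(if i = b then \<phi> else if \<rho> i < \<rho> b then v else u) (x $ i)\<bar>)"
    by (simp add: product_flow_def abs_prod)
  also have "\<dots> \<le> (\<Prod>i\<in>(UNIV :: 'd set). c)"
    using assms by (intro prod_mono) (simp split: if_split)
  finally show ?thesis by simp
qed

theorem lemmaG1:
  "\<exists>C::real. \<forall>l::int. l \<ge> 2 \<longrightarrow>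
     (\<exists>\<psi> :: int ^ 'd::finite \<Rightarrow> 'd \<Rightarrow> real.
        flow_connects \<psi> (unif l) (unif (l - 1)) \<and>
        flow_support_in \<psi> (box l) \<and>
        (\<forall>x\<in>box l. \<forall>b. \<bar>\<psi> x b\<bar> \<le> C * real_of_int l powi (- int CARD('d))))"
proof (rule exI, intro allI impI)
  fix l :: int
  assume l: "l \<ge> 2"
  obtain \<rho> :: "'d \<Rightarrow> nat" where "inj \<rho>"
    using finite_imp_inj_to_nat_seg[OF finite] by blast
  define \<psi> where "\<psi> = product_flow \<rho> (unif_1d l) (unif_1d (l - 1)) (flow_1d l)"
  have "flow_connects \<psi> (unif l) (unif (l - 1))"
    unfolding \<psi>_def unif_eq_prod_unif_1d
    using \<open>inj \<rho>\<close> flow_1d_diff[OF l] by (rule flow_connects_product_flow)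
  moreover have "flow_support_in \<psi> (box l)"
    unfolding \<psi>_def
    by (rule flow_support_in_product_flow) (auto simp: flow_1d_def unif_1d_def split: if_splits)
  moreover have "\<bar>\<psi> x b\<bar> \<le> 2 ^ CARD('d) * real_of_int l powi (- int CARD('d))" for x b
  proof -
    define c :: real where "c = 2 / of_int l"
    have "1 / of_int l \<le> c" "1 / of_int (l - 1) \<le> c"
      using l by (auto simp: c_def field_simps)
    then have "\<bar>flow_1d l t\<bar> \<le> c" "\<bar>unif_1d l t\<bar> \<le> c" "\<bar>unif_1d (l - 1) t\<bar> \<le> c" for t
      using l abs_flow_1d_le[OF l, of t] abs_unif_1d_le[of l t] abs_unif_1d_le[of "l - 1" t]
      by linarith+
    then have "\<bar>\<psi> x b\<bar> \<le> c ^ CARD('d)"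
      unfolding \<psi>_def by (rule abs_product_flow_le)
    then show ?thesis
      by (simp add: c_def power_int_minus power_divide divide_inverse power_inverse)
  qed
  ultimately show "\<exists>\<psi> :: int ^ 'd \<Rightarrow> 'd \<Rightarrow> real.
      flow_connects \<psi> (unif l) (unif (l - 1)) \<and> flow_support_in \<psi> (box l) \<and>
      (\<forall>x\<in>box l. \<forall>b. \<bar>\<psi> x b\<bar> \<le> 2 ^ CARD('d) * real_of_int l powi (- int CARD('d)))"
    by blast
qed

end
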